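(* Let $\mathcal{A}\subset\mathbb{Z}$ be a finite alphabet, let $G=(V,E)$ be a finite directed graph with edge labelling $\ell:E\to\mathcal{A}$, assume the matrix $M=\sum_{a\in\mathcal{A}}M_a$ is primitive, let $\beta>1$ be a Pisot number and let $\nu=(\phi^+)_*(\mu^+)$ as described in the context. Then the set $P=\{x\in\mathbb{R}\mid \nu(\{x\})>0\}$ of atoms of $\nu$ is a finite subset of $\mathbb{Q}(\beta)$.
   Context: For $a\in\mathcal{A}$, $M_a$ is the $V\times V$ matrix with $(M_a)_{ij}=1$ if $(i,j)\in E$ and $\ell((i,j))=a$, and $0$ otherwise. By Perron–Frobenius, $M$ has a dominant eigenvalue $\lambda>0$ with positive left eigenvector $\mathbf v_L$ and right eigenvector $\mathbf v_R$, normalised by $\mathbf v_L^{\mathsf T}\mathbf v_R=1$. $\mathcal{K}^+\subseteq\mathcal{A}^{\mathbb{N}}$ is the set of sequences $(\ell(e_k))_{k\ge1}$ for infinite paths $e_1e_2\ldots$ in $G$ (terminal vertex of $e_j$ equals initial vertex of $e_{j+1}$). $\mu^+$ is the Borel probability measure on $\mathcal{K}^+$ with $\mu^+([\varepsilon_1,\ldots,\varepsilon_k])=\lambda^{-k}\mathbf v_L^{\mathsf T}M_{\varepsilon_1}\cdots M_{\varepsilon_k}\mathbf v_R$ on cylinder sets $[\varepsilon_1,\ldots,\varepsilon_k]=\{x\in\mathcal{K}^+: x_1=\varepsilon_1,\ldots,x_k=\varepsilon_k\}$. A Pisot number is an algebraic integer $>1$ all of whose other Galois conjugates have modulus $<1$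 (integers $\ge2$ included). $\phi^+:\mathcal{K}^+\to\mathbb{R}$, $(x_k)\mapsto\sum_{k\ge1}x_k\beta^{-k}$, and $\nu(A)=\mu^+((\phi^+)^{-1}(A))$. *)

theory Defs
  imports "HOL-Probability.Probability" "HOL-Computational_Algebra.Polynomial_Factorial"
begin

text \<open>Square matrices over the vertex set {..<n}, represented as functions nat => nat => real.\<close>

definition mat_mult :: "nat \<Rightarrow> (nat \<Rightarrow> nat \<Rightarrow> real) \<Rightarrow> (nat \<Rightarrow> nat \<Rightarrow> real) \<Rightarrow> nat \<Rightarrow> nat \<Rightarrow> real" where
  "mat_mult n A B = (\<lambda>i j. \<Sum>l<n. A i l * B l j)"

definition mat_id :: "nat \<Rightarrow> nat \<Rightarrow> real" where
  "mat_id = (\<lambda>i j. if i = j then 1 else 0)"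

fun mat_pow :: "nat \<Rightarrow> (nat \<Rightarrow> nat \<Rightarrow> real) \<Rightarrow> nat \<Rightarrow> nat \<Rightarrow> nat \<Rightarrow> real" where
  "mat_pow n A 0 = mat_id"
| "mat_pow n A (Suc k) = mat_mult n A (mat_pow n A k)"

definition primitive_matrix :: "nat \<Rightarrow> (nat \<Rightarrow> nat \<Rightarrow> real) \<Rightarrow> bool" where
  "primitive_matrix n A \<longleftrightarrow> (\<forall>i<n. \<forall>j<n. A i j \<ge> 0) \<and>
     (\<exists>k>0. \<forall>i<n. \<forall>j<n. mat_pow n A k i j > 0)"

definition label_matrix :: "(nat \<times> nat) set \<Rightarrow> (nat \<times> nat \<Rightarrow> int) \<Rightarrow> int \<Rightarrow> nat \<Rightarrow> nat \<Rightarrow> real" where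
  "label_matrix E lbl a = (\<lambda>i j. if (i, j) \<in> E \<and> lbl (i, j) = a then 1 else 0)"

definition total_matrix :: "int set \<Rightarrow> (nat \<times> nat) set \<Rightarrow> (nat \<times> nat \<Rightarrow> int) \<Rightarrow> nat \<Rightarrow> nat \<Rightarrow> real" where
  "total_matrix Alph E lbl = (\<lambda>i j. \<Sum>a\<in>Alph. label_matrix E lbl a i j)"

definition word_matrix :: "nat \<Rightarrow> (nat \<times> nat) set \<Rightarrow> (nat \<times> nat \<Rightarrow> int) \<Rightarrow> int list \<Rightarrow> nat \<Rightarrow> nat \<Rightarrow> real" where
  "word_matrix n E lbl w = foldr (\<lambda>a B. mat_mult n (label_matrix E lbl a) B) w mat_id"

definition bilin :: "nat \<Rightarrow> (nat \<Rightarrow> real) \<Rightarrow> (nat \<Rightarrow> nat \<Rightarrow> real) \<Rightarrow> (nat \<Rightarrow> real) \<Rightarrow> real" where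
  "bilin n u A v = (\<Sum>i<n. \<Sum>j<n. u i * A i j * v j)"

text \<open>K^+: label sequences of infinite paths (sequences indexed from 0, i.e. x_{k+1} = x k).\<close>
definition K_plus :: "nat \<Rightarrow> (nat \<times> nat) set \<Rightarrow> (nat \<times> nat \<Rightarrow> int) \<Rightarrow> (nat \<Rightarrow> int) set" where
  "K_plus n E lbl = {x. \<exists>p::nat \<Rightarrow> nat. \<forall>k. p k < n \<and> (p k, p (Suc k)) \<in> E \<and> x k = lbl (p k, p (Suc k))}"

definition cylinder :: "(nat \<Rightarrow> int) set \<Rightarrow> int list \<Rightarrow> (nat \<Rightarrow> int) set" where
  "cylinder K w = {x \<in> K. \<forall>k<length w. x k = w ! k}"

definition phi_plus :: "real \<Rightarrow> (nat \<Rightarrow> int) \<Rightarrow> real" where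
  "phi_plus \<beta> x = (\<Sum>k. real_of_int (x k) / \<beta> ^ Suc k)"

definition pisot :: "real \<Rightarrow> bool" where
  "pisot \<beta> \<longleftrightarrow> \<beta> > 1 \<and> (\<exists>p :: int poly. lead_coeff p = 1 \<and> irreducible p \<and>
      poly (map_poly of_int p) \<beta> = 0 \<and>
      (\<forall>z::complex. poly (map_poly of_int p) z = 0 \<and> z \<noteq> complex_of_real \<beta> \<longrightarrow> cmod z < 1))"

definition rat_adjoin :: "real \<Rightarrow> real set" where
  "rat_adjoin \<beta> = {x. \<exists>p q :: rat poly. poly (map_poly of_rat q) \<beta> \<noteq> 0 \<and>
       x = poly (map_poly of_rat p) \<beta> / poly (map_poly of_rat q) \<beta>}"

end

theory Submission
  imports Defs
begin

text \<open>
  Run the Parry Markov chain on the vertices, which moves along the edge (i, j) with probability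
  vR j / (lam * vR i). Let prefix_mass k j y be the probability that the chain started at j reads
  a word of length k that is a prefix of some path in K expanding to y, and limit_mass j y its
  decreasing limit. An atom of \<nu> at y makes limit_mass i y positive for some i. Along the maps
  y \<mapsto> \<beta> y - a the function limit_mass is subharmonic for the chain, and for fixed j it sums to
  at most 1 over any finite set of points, because prefixes of expansions of distinct points are
  eventually distinct. Hence it attains a positive maximum, and by the maximum principle the set
  where the maximum is attained is invariant under the maps. These maps expand distances by \<beta>
  while the set is bounded, so by primitivity it contains exactly one point y_j for every vertex
  j, and y_j = \<beta> y_i - lbl(i, j) on every edge. Every path of K then expands to one of the
  finitely many y_j, and a closed walk of length k gives (\<beta>^k - 1) y_j \<in> \<rat>[\<beta>].
\<close>

lemma geometric_digit_sums:
  fixes \<beta> c :: real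
  assumes "\<beta> > 1"
  shows "(\<lambda>k. c / \<beta> * (1 / \<beta>) ^ k) sums (c / (\<beta> - 1))"
proof -
  have "(\<lambda>k. (1 / \<beta>) ^ k) sums (1 / (1 - 1 / \<beta>))"
    using assms by (intro geometric_sums) auto
  from sums_mult[OF this, of "c / \<beta>"] show ?thesis
    using assms by (simp add: field_simps)
qed

lemma digit_term_le:
  fixes \<beta> :: real and s :: "nat \<Rightarrow> int"
  assumes "\<beta> > 1" and "\<bar>s k\<bar> \<le> A"
  shows "norm (real_of_int (s k) / \<beta> ^ Suc k) \<le> of_int A / \<beta> * (1 / \<beta>) ^ k"
proof -
  have "\<bar>real_of_int (s k)\<bar> \<le> of_int A"
    using assms(2) by linarith
  then show ?thesis
    using assms(1) by (simp add: abs_divide power_divide divide_right_mono)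
qed

lemma phi_plus_summable:
  assumes "\<beta> > 1" and "\<And>k. \<bar>s k\<bar> \<le> A"
  shows "summable (\<lambda>k. real_of_int (s k) / \<beta> ^ Suc k)"
proof (rule summable_comparison_test')
  show "summable (\<lambda>k. of_int A / \<beta> * (1 / \<beta>) ^ k)"
    using geometric_digit_sums[OF assms(1)] by (rule sums_summable)
  show "norm (real_of_int (s k) / \<beta> ^ Suc k) \<le> of_int A / \<beta> * (1 / \<beta>) ^ k" for k
    using assms by (rule digit_term_le)
qed

lemma phi_plus_abs_le:
  assumes "\<beta> > 1" and "\<And>k. \<bar>s k\<bar> \<le> A"
  shows "\<bar>phi_plus \<beta> s\<bar> \<le> of_int A / (\<beta> - 1)"
  using norm_suminf_le[OF digit_term_le[OF assms(1) assms(2)]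
      sums_summable[OF geometric_digit_sums[OF assms(1)]]]
    sums_unique[OF geometric_digit_sums[OF assms(1)]]
  unfolding phi_plus_def by simp

lemma phi_plus_split:
  assumes "\<beta> > 1" and "\<And>k. \<bar>s k\<bar> \<le> A"
  shows "phi_plus \<beta> s = (\<Sum>t<k. real_of_int (s t) / \<beta> ^ Suc t) + phi_plus \<beta> (\<lambda>t. s (t + k)) / \<beta> ^ k"
proof -
  have "summable (\<lambda>t. real_of_int (s (t + k)) / \<beta> ^ Suc t)"
    using assms by (intro phi_plus_summable) auto
  then have tail: "(\<Sum>t. real_of_int (s (t + k)) / \<beta> ^ Suc (t + k)) = phi_plus \<beta> (\<lambda>t. s (t + k)) / \<beta> ^ k"
    unfolding phi_plus_def by (subst suminf_divide[symmetric]) (auto simp: power_add mult.assoc)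
  have "summable (\<lambda>t. real_of_int (s t) / \<beta> ^ Suc t)"
    using assms by (rule phi_plus_summable)
  then have "phi_plus \<beta> s = (\<Sum>t. real_of_int (s (t + k)) / \<beta> ^ Suc (t + k)) + (\<Sum>t<k. real_of_int (s t) / \<beta> ^ Suc t)"
    unfolding phi_plus_def by (rule suminf_split_initial_segment)
  then show ?thesis
    unfolding tail by simp
qed

lemma phi_plus_agree_prefix:
  assumes "\<beta> > 1" and "\<And>k. \<bar>s k\<bar> \<le> A" and "\<And>k. \<bar>s' k\<bar> \<le> A"
    and "\<And>t. t < k \<Longrightarrow> s t = s' t"
  shows "\<bar>phi_plus \<beta> s - phi_plus \<beta> s'\<bar> \<le> 2 * (of_int A / (\<beta> - 1)) / \<beta> ^ k"
proof -
  let ?head = "\<lambda>s. \<Sum>t<k. real_of_int (s t) / \<beta> ^ Suc t"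
  let ?tail = "\<lambda>s. phi_plus \<beta> (\<lambda>t. s (t + k))"
  have "phi_plus \<beta> s = ?head s + ?tail s / \<beta> ^ k"
    by (rule phi_plus_split[OF assms(1)]) (rule assms(2))
  moreover have "phi_plus \<beta> s' = ?head s' + ?tail s' / \<beta> ^ k"
    by (rule phi_plus_split[OF assms(1)]) (rule assms(3))
  moreover have "?head s = ?head s'"
    using assms(4) by (intro sum.cong) auto
  ultimately have diff: "\<bar>phi_plus \<beta> s - phi_plus \<beta> s'\<bar> = \<bar>?tail s - ?tail s'\<bar> / \<beta> ^ k"
    using assms(1) by (simp add: abs_divide diff_divide_distrib[symmetric])
  have "\<bar>?tail s\<bar> \<le> of_int A / (\<beta> - 1)" and "\<bar>?tail s'\<bar> \<le> of_int A / (\<beta> - 1)"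
    using assms(1-3) by (auto intro!: phi_plus_abs_le)
  then have "\<bar>?tail s - ?tail s'\<bar> \<le> 2 * (of_int A / (\<beta> - 1))"
    by linarith
  then show ?thesis
    unfolding diff using assms(1) by (intro divide_right_mono) auto
qed

lemma phi_plus_orbit:
  assumes "\<beta> > 1" and "\<And>k. \<bar>z k\<bar> \<le> C" and "\<And>k. z (Suc k) = \<beta> * z k - of_int (s k)"
  shows "phi_plus \<beta> s = z 0"
proof -
  have partial: "(\<Sum>t<k. real_of_int (s t) / \<beta> ^ Suc t) = z 0 - z k / \<beta> ^ k" for k
  proof (induction k)
    case (Suc k)
    have "z k / \<beta> ^ k - z (Suc k) / \<beta> ^ Suc k = real_of_int (s k) / \<beta> ^ Suc k"
      using assms(1) by (simp add: assms(3) field_simps)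
    with Suc show ?case by simp
  qed simp
  have "(\<lambda>k. z k / \<beta> ^ k) \<longlonglongrightarrow> 0"
  proof (rule Lim_null_comparison)
    show "(\<lambda>k. C * (1 / \<beta>) ^ k) \<longlonglongrightarrow> 0"
      using assms(1) by (intro tendsto_mult_right_zero LIMSEQ_realpow_zero) auto
    show "\<forall>\<^sub>F k in sequentially. norm (z k / \<beta> ^ k) \<le> C * (1 / \<beta>) ^ k"
      using assms(1,2) by (intro always_eventually allI) (simp add: abs_divide power_divide divide_right_mono)
  qed
  then have "(\<lambda>t. real_of_int (s t) / \<beta> ^ Suc t) sums z 0"
    unfolding sums_def partial using tendsto_diff[OF tendsto_const] by fastforce
  then show ?thesis
    unfolding phi_plus_def by (rule sums_unique[symmetric])
qed

lemma bounded_expansion_eq_0: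
  fixes \<beta> d :: real
  assumes "\<beta> > 1" and "\<And>k. \<bar>\<beta> ^ k * d\<bar> \<le> C"
  shows "d = 0"
proof (rule ccontr)
  assume "d \<noteq> 0"
  then obtain k where "C / \<bar>d\<bar> < \<beta> ^ k"
    using real_arch_pow[OF assms(1)] by blast
  then have "C < \<bar>\<beta> ^ k * d\<bar>"
    using \<open>d \<noteq> 0\<close> assms(1) by (simp add: abs_mult field_simps)
  with assms(2) show False by (simp add: not_le[symmetric])
qed

lemma sum_subset_image_le:
  fixes g :: "'a \<Rightarrow> 'b :: ordered_comm_monoid_add"
  assumes "finite B" and "A \<subseteq> f ` B" and "\<And>x. 0 \<le> g x"
  shows "sum g A \<le> (\<Sum>x\<in>B. g (f x))"
proof -
  have "sum g A \<le> sum g (f ` B)"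
    using assms by (intro sum_mono2) auto
  also have "\<dots> \<le> (\<Sum>x\<in>B. g (f x))"
    using sum_image_le[of B g f] assms by (simp add: comp_def)
  finally show ?thesis .
qed

lemma map_poly_of_rat_add:
  "map_poly (of_rat :: rat \<Rightarrow> 'a :: field_char_0) (p + q) = map_poly of_rat p + map_poly of_rat q"
  by (rule poly_eqI) (simp add: coeff_map_poly of_rat_add)

locale labelled_graph =
  fixes Alph :: "int set" and n :: nat and E :: "(nat \<times> nat) set" and lbl :: "nat \<times> nat \<Rightarrow> int"
  assumes finite_Alph: "finite Alph"
    and edges_subset: "E \<subseteq> {..<n} \<times> {..<n}"
    and label_in_Alph: "\<forall>e\<in>E. lbl e \<in> Alph"
    and primitive: "primitive_matrix n (total_matrix Alph E lbl)"
begin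

abbreviation "K \<equiv> K_plus n E lbl"
abbreviation "M \<equiv> total_matrix Alph E lbl"

lemma sum_label_matrix:
  "(\<Sum>a\<in>Alph. label_matrix E lbl a i j * f a) = (if (i, j) \<in> E then f (lbl (i, j)) else 0)"
proof (cases "(i, j) \<in> E")
  case True
  then have "lbl (i, j) \<in> Alph"
    using label_in_Alph by auto
  moreover have "(\<Sum>a\<in>Alph. label_matrix E lbl a i j * f a) = (\<Sum>a\<in>Alph. if lbl (i, j) = a then f a else 0)"
    using True by (intro sum.cong) (auto simp: label_matrix_def)
  ultimately show ?thesis
    using True finite_Alph by simp
qed (simp add: label_matrix_def)

lemma total_matrix_eq: "M i j = (if (i, j) \<in> E then 1 else 0)"
  using sum_label_matrix[of i j "\<lambda>_. 1"] by (simp add: total_matrix_def)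

lemma mat_pow_0_posD: "mat_pow n M 0 i j > 0 \<Longrightarrow> i = j"
  by (simp add: mat_id_def split: if_splits)

lemma mat_pow_Suc_posD:
  assumes "mat_pow n M (Suc k) i j > 0"
  obtains l where "(i, l) \<in> E" and "mat_pow n M k l j > 0"
proof -
  have "\<exists>l\<in>{..<n}. M i l * mat_pow n M k l j > 0"
  proof (rule ccontr)
    assume "\<not> ?thesis"
    then have "(\<Sum>l<n. M i l * mat_pow n M k l j) \<le> 0"
      by (intro sum_nonpos) (auto simp: not_less)
    with assms show False
      by (simp add: mat_mult_def)
  qed
  then obtain l where "M i l * mat_pow n M k l j > 0"
    by blast
  then have "(i, l) \<in> E" and "mat_pow n M k l j > 0"
    by (auto simp: total_matrix_eq split: if_splits)
  then show thesis
    by (rule that)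
qed

lemma primitive_exponent:
  obtains k where "k > 0" and "\<forall>i<n. \<forall>j<n. mat_pow n M k i j > 0"
  using primitive unfolding primitive_matrix_def by blast

lemma ex_out_edge:
  assumes "i < n"
  obtains j where "(i, j) \<in> E"
proof -
  obtain k where "k > 0" and pos: "\<forall>i<n. \<forall>j<n. mat_pow n M k i j > 0"
    by (rule primitive_exponent)
  then obtain k' where "k = Suc k'"
    using gr0_implies_Suc by blast
  with pos assms have "mat_pow n M (Suc k') i i > 0"
    by blast
  then obtain j where "(i, j) \<in> E"
    by (rule mat_pow_Suc_posD)
  then show thesis
    by (rule that)
qed

lemma walk_preserves:
  assumes closed: "\<And>i z j. S i z \<Longrightarrow> (i, j) \<in> E \<Longrightarrow> S j (f i j z)"
  shows "mat_pow n M k i j > 0 \<Longrightarrow> S i z \<Longrightarrow> \<exists>z'. S j z'"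
proof (induction k arbitrary: i z)
  case 0
  then show ?case
    using mat_pow_0_posD by blast
next
  case (Suc k)
  obtain l where "(i, l) \<in> E" and "mat_pow n M k l j > 0"
    using Suc.prems(1) by (rule mat_pow_Suc_posD)
  with Suc closed show ?case
    by blast
qed

lemma K_plus_label: "s \<in> K \<Longrightarrow> s k \<in> Alph"
  unfolding K_plus_def using label_in_Alph by auto

lemma K_plus_Suc:
  assumes "s \<in> K"
  shows "(\<lambda>k. s (Suc k)) \<in> K"
proof -
  obtain p where "\<forall>k. p k < n \<and> (p k, p (Suc k)) \<in> E \<and> s k = lbl (p k, p (Suc k))"
    using assms unfolding K_plus_def by blast
  then show ?thesis
    unfolding K_plus_def by (auto intro!: exI[of _ "\<lambda>k. p (Suc k)"])
qed

end

locale beta_graph = labelled_graph +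
  fixes \<beta> :: real
  assumes beta_gt_1: "\<beta> > 1"
begin

abbreviation "phi \<equiv> phi_plus \<beta>"

definition digit_bound :: int where
  "digit_bound = (\<Sum>a\<in>Alph. \<bar>a\<bar>)"

definition radius :: real where
  "radius = of_int digit_bound / (\<beta> - 1)"

lemma K_plus_label_bound: "s \<in> K \<Longrightarrow> \<bar>s k\<bar> \<le> digit_bound"
  unfolding digit_bound_def using K_plus_label finite_Alph by (intro member_le_sum) auto

lemma phi_K_plus_bound: "s \<in> K \<Longrightarrow> \<bar>phi s\<bar> \<le> radius"
  unfolding radius_def by (rule phi_plus_abs_le[OF beta_gt_1]) (rule K_plus_label_bound)

lemma phi_K_plus_Suc:
  assumes "s \<in> K"
  shows "phi (\<lambda>k. s (Suc k)) = \<beta> * phi s - of_int (s 0)"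
proof -
  have "phi s = (\<Sum>t<1. real_of_int (s t) / \<beta> ^ Suc t) + phi (\<lambda>t. s (t + 1)) / \<beta> ^ 1"
    by (rule phi_plus_split[OF beta_gt_1]) (rule K_plus_label_bound[OF assms])
  then show ?thesis
    using beta_gt_1 by (simp add: field_simps)
qed

lemma phi_K_plus_agree_prefix:
  assumes "s \<in> K" and "s' \<in> K" and "\<And>t. t < k \<Longrightarrow> s t = s' t"
  shows "\<bar>phi s - phi s'\<bar> \<le> 2 * radius / \<beta> ^ k"
  unfolding radius_def
  by (rule phi_plus_agree_prefix[OF beta_gt_1 K_plus_label_bound[OF assms(1)] K_plus_label_bound[OF assms(2)]])
    (rule assms(3))

definition edge_consistent :: "(nat \<Rightarrow> real) \<Rightarrow> bool" where
  "edge_consistent y \<longleftrightarrow> (\<forall>(i, j)\<in>E. y j = \<beta> * y i - of_int (lbl (i, j)))"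

lemma edge_consistent_phi:
  assumes "edge_consistent y" and "s \<in> K"
  obtains i where "i < n" and "phi s = y i"
proof -
  obtain p where p: "\<forall>k. p k < n \<and> (p k, p (Suc k)) \<in> E \<and> s k = lbl (p k, p (Suc k))"
    using assms(2) unfolding K_plus_def by blast
  have "phi s = y (p 0)"
  proof (rule phi_plus_orbit[OF beta_gt_1, where z = "\<lambda>k. y (p k)"])
    show "\<bar>y (p k)\<bar> \<le> Max ((\<lambda>i. \<bar>y i\<bar>) ` {..<n})" for k
      using p by (intro Max_ge) auto
    show "y (p (Suc k)) = \<beta> * y (p k) - of_int (s k)" for k
      using assms(1) p unfolding edge_consistent_def by auto
  qed
  moreover have "p 0 < n"
    using p by blast
  ultimately show thesis
    by (intro that)
qed

lemma edge_consistent_walk: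
  assumes "edge_consistent y"
  shows "mat_pow n M k i j > 0 \<Longrightarrow> \<exists>q :: rat poly. \<beta> ^ k * y i = poly (map_poly of_rat q) \<beta> + y j"
proof (induction k arbitrary: i)
  case 0
  then show ?case
    using mat_pow_0_posD by (intro exI[of _ 0]) auto
next
  case (Suc k)
  obtain l where edge: "(i, l) \<in> E" and "mat_pow n M k l j > 0"
    using Suc.prems by (rule mat_pow_Suc_posD)
  then obtain q where q: "\<beta> ^ k * y l = poly (map_poly of_rat q) \<beta> + y j"
    using Suc.IH by blast
  have y_l: "y l = \<beta> * y i - of_int (lbl (i, l))"
    using assms edge unfolding edge_consistent_def by auto
  have "\<beta> ^ Suc k * y i = \<beta> ^ k * y l + of_int (lbl (i, l)) * \<beta> ^ k"
    unfolding y_l by (simp add: algebra_simps)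
  also have "\<dots> = poly (map_poly of_rat (q + monom (of_int (lbl (i, l))) k)) \<beta> + y j"
    using q by (simp add: map_poly_of_rat_add map_poly_monom poly_monom)
  finally show ?case
    by blast
qed

lemma edge_consistent_rat_adjoin:
  assumes "edge_consistent y" and "i < n"
  shows "y i \<in> rat_adjoin \<beta>"
proof -
  obtain k where "k > 0" and "\<forall>i<n. \<forall>j<n. mat_pow n M k i j > 0"
    by (rule primitive_exponent)
  then obtain q where q: "\<beta> ^ k * y i = poly (map_poly of_rat q) \<beta> + y i"
    using edge_consistent_walk[OF assms(1)] assms(2) by blast
  let ?d = "monom (1 :: rat) k + monom (-1) 0"
  have d: "poly (map_poly of_rat ?d) \<beta> = \<beta> ^ k - 1"
    by (simp add: map_poly_of_rat_add map_poly_monom poly_monom)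
  have "\<beta> ^ k > 1"
    using beta_gt_1 \<open>k > 0\<close> by (simp add: one_less_power)
  then have "poly (map_poly of_rat ?d) \<beta> \<noteq> 0" and "y i = poly (map_poly of_rat q) \<beta> / poly (map_poly of_rat ?d) \<beta>"
    using q unfolding d by (simp_all add: field_simps)
  then show ?thesis
    unfolding rat_adjoin_def by blast
qed

lemma invariant_set_unique:
  assumes closed: "\<And>i z j. S i z \<Longrightarrow> (i, j) \<in> E \<Longrightarrow> S j (\<beta> * z - of_int (lbl (i, j)))"
    and bounded: "\<And>i z. S i z \<Longrightarrow> i < n \<and> \<bar>z\<bar> \<le> C"
    and "S i z" and "S i z'"
  shows "z = z'"
proof -
  have "\<exists>j w w'. S j w \<and> S j w' \<and> w - w' = \<beta> ^ k * (z - z')" for k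
  proof (induction k)
    case 0
    then show ?case
      using assms(3,4) by auto
  next
    case (Suc k)
    then obtain j w w' where "S j w" and "S j w'" and diff: "w - w' = \<beta> ^ k * (z - z')"
      by blast
    obtain j' where edge: "(j, j') \<in> E"
      using bounded[OF \<open>S j w\<close>] ex_out_edge by blast
    let ?a = "of_int (lbl (j, j'))"
    have "S j' (\<beta> * w - ?a)" and "S j' (\<beta> * w' - ?a)"
      using closed edge \<open>S j w\<close> \<open>S j w'\<close> by blast+
    moreover have "(\<beta> * w - ?a) - (\<beta> * w' - ?a) = \<beta> ^ Suc k * (z - z')"
      using diff by (simp add: right_diff_distrib[symmetric])
    ultimately show ?case
      by blast
  qed
  then have "\<bar>\<beta> ^ k * (z - z')\<bar> \<le> 2 * C" for k
    using bounded by (metis abs_triangle_ineq4 add_mono mult_2 order_trans)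
  then have "z - z' = 0"
    by (rule bounded_expansion_eq_0[OF beta_gt_1])
  then show ?thesis
    by simp
qed

lemma invariant_set_edge_consistent:
  assumes closed: "\<And>i z j. S i z \<Longrightarrow> (i, j) \<in> E \<Longrightarrow> S j (\<beta> * z - of_int (lbl (i, j)))"
    and bounded: "\<And>i z. S i z \<Longrightarrow> i < n \<and> \<bar>z\<bar> \<le> C"
    and "S i z"
  obtains y where "edge_consistent y"
proof -
  obtain k where "\<forall>i<n. \<forall>j<n. mat_pow n M k i j > 0"
    by (rule primitive_exponent)
  then have "\<exists>z'. S j z'" if "j < n" for j
    using walk_preserves[of S "\<lambda>i j z. \<beta> * z - of_int (lbl (i, j))", OF closed] bounded[OF assms(3)] assms(3) that
    by blast
  then have S_choice: "S j (SOME z. S j z)" if "j < n" for j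
    using that by (blast intro: someI_ex)
  have "edge_consistent (\<lambda>j. SOME z. S j z)"
    unfolding edge_consistent_def
  proof (intro ballI, clarify)
    fix i j assume "(i, j) \<in> E"
    then show "(SOME z. S j z) = \<beta> * (SOME z. S i z) - of_int (lbl (i, j))"
      using closed S_choice edges_subset invariant_set_unique[of S, OF closed bounded] by blast
  qed
  then show thesis
    by (rule that)
qed

end

locale parry_weights = beta_graph +
  fixes lam :: real and vR :: "nat \<Rightarrow> real"
  assumes lam_pos: "lam > 0"
    and vR_pos: "\<forall>i<n. vR i > 0"
    and vR_eig: "\<forall>i<n. (\<Sum>j<n. M i j * vR j) = lam * vR i"
begin

definition weight :: "int list \<Rightarrow> nat \<Rightarrow> real" where
  "weight w i = (\<Sum>j<n. word_matrix n E lbl w i j * vR j)"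

definition words :: "nat \<Rightarrow> int list set" where
  "words k = {w. set w \<subseteq> Alph \<and> length w = k}"

lemma word_matrix_nonneg: "word_matrix n E lbl w i j \<ge> 0"
proof (induction w arbitrary: i j)
  case Nil
  then show ?case
    by (simp add: word_matrix_def mat_id_def)
next
  case (Cons a w)
  then show ?case
    unfolding word_matrix_def
    by (auto simp: mat_mult_def label_matrix_def word_matrix_def intro!: sum_nonneg)
qed

lemma weight_nonneg: "weight w i \<ge> 0"
  unfolding weight_def using word_matrix_nonneg vR_pos
  by (intro sum_nonneg mult_nonneg_nonneg) (auto intro: less_imp_le)

lemma weight_Nil:
  assumes "i < n"
  shows "weight [] i = vR i"
proof -
  have "weight [] i = (\<Sum>j<n. if i = j then vR j else 0)"
    unfolding weight_def word_matrix_def mat_id_def by (intro sum.cong) auto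
  with assms show ?thesis
    by simp
qed

lemma weight_Cons: "weight (a # w) i = (\<Sum>j<n. label_matrix E lbl a i j * weight w j)"
proof -
  have "weight (a # w) i = (\<Sum>j<n. \<Sum>l<n. label_matrix E lbl a i l * word_matrix n E lbl w l j * vR j)"
    by (simp add: weight_def word_matrix_def mat_mult_def sum_distrib_right)
  also have "\<dots> = (\<Sum>l<n. label_matrix E lbl a i l * weight w l)"
    by (subst sum.swap) (simp add: weight_def sum_distrib_left mult.assoc)
  finally show ?thesis .
qed

lemma sum_weight_snoc: "(\<Sum>a\<in>Alph. weight (u @ [a]) i) = lam * weight u i"
proof (induction u arbitrary: i)
  case Nil
  have "(\<Sum>a\<in>Alph. weight [a] i) = (\<Sum>j<n. \<Sum>a\<in>Alph. label_matrix E lbl a i j * weight [] j)"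
    unfolding weight_Cons by (rule sum.swap)
  also have "\<dots> = (\<Sum>j<n. M i j * weight [] j)"
    by (intro sum.cong refl) (simp add: sum_label_matrix total_matrix_eq)
  also have "\<dots> = lam * weight [] i"
  proof (cases "i < n")
    case True
    then show ?thesis
      using vR_eig by (simp add: weight_Nil)
  next
    case False
    then have "M i j = 0" for j
      using edges_subset by (auto simp: total_matrix_eq)
    with False show ?thesis
      by (simp add: weight_def word_matrix_def mat_id_def)
  qed
  finally show ?case
    by simp
next
  case (Cons b u)
  have "(\<Sum>a\<in>Alph. weight ((b # u) @ [a]) i) = (\<Sum>j<n. label_matrix E lbl b i j * (\<Sum>a\<in>Alph. weight (u @ [a]) j))"
    unfolding append_Cons weight_Cons sum_distrib_left by (rule sum.swap)
  also have "\<dots> = lam * weight (b # u) i"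
    by (simp add: Cons weight_Cons sum_distrib_left mult.left_commute)
  finally show ?case .
qed

lemma finite_words: "finite (words k)"
  unfolding words_def by (rule finite_lists_length_eq[OF finite_Alph])

lemma words_Suc: "words (Suc k) = (\<lambda>(u, a). u @ [a]) ` (words k \<times> Alph)"
proof
  show "words (Suc k) \<subseteq> (\<lambda>(u, a). u @ [a]) ` (words k \<times> Alph)"
  proof
    fix w
    assume w: "w \<in> words (Suc k)"
    then obtain u a where "w = u @ [a]"
      by (cases w rule: rev_cases) (auto simp: words_def)
    with w show "w \<in> (\<lambda>(u, a). u @ [a]) ` (words k \<times> Alph)"
      by (auto simp: words_def intro!: image_eqI[where x = "(u, a)"])
  qed
qed (auto simp: words_def)

lemma sum_weight_words: "i < n \<Longrightarrow> (\<Sum>w\<in>words k. weight w i) = lam ^ k * vR i"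
proof (induction k)
  case 0
  have "words 0 = {[]}"
    by (auto simp: words_def)
  with 0 show ?case
    by (simp add: weight_Nil)
next
  case (Suc k)
  have "inj_on (\<lambda>(u, a). u @ [a]) (words k \<times> Alph)"
    by (auto simp: inj_on_def)
  then have "(\<Sum>w\<in>words (Suc k). weight w i) = (\<Sum>u\<in>words k. \<Sum>a\<in>Alph. weight (u @ [a]) i)"
    unfolding words_Suc by (simp add: sum.reindex sum.cartesian_product case_prod_beta')
  with Suc show ?case
    by (simp add: sum_weight_snoc sum_distrib_left[symmetric])
qed

definition coding_prefixes :: "nat \<Rightarrow> real \<Rightarrow> int list set" where
  "coding_prefixes k y = {w. length w = k \<and> (\<exists>s\<in>K. phi s = y \<and> (\<forall>t<k. s t = w ! t))}"

lemma coding_prefixes_subset_words: "coding_prefixes k y \<subseteq> words k"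
proof
  fix w
  assume "w \<in> coding_prefixes k y"
  then obtain s where "length w = k" and "s \<in> K" and "\<forall>t<k. s t = w ! t"
    unfolding coding_prefixes_def by blast
  then show "w \<in> words k"
    unfolding words_def by (auto simp: in_set_conv_nth) (metis K_plus_label)
qed

lemma finite_coding_prefixes: "finite (coding_prefixes k y)"
  using finite_subset[OF coding_prefixes_subset_words finite_words] .

lemma coding_prefixes_Suc_snoc:
  "coding_prefixes (Suc k) y \<subseteq> (\<lambda>(u, a). u @ [a]) ` (coding_prefixes k y \<times> Alph)"
proof
  fix w
  assume "w \<in> coding_prefixes (Suc k) y"
  then obtain s where w: "length w = Suc k" and s: "s \<in> K" "phi s = y" "\<forall>t<Suc k. s t = w ! t"
    unfolding coding_prefixes_def by blast
  then obtain u a where "w = u @ [a]"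
    by (cases w rule: rev_cases) auto
  moreover have "u \<in> coding_prefixes k y"
    using w s \<open>w = u @ [a]\<close> unfolding coding_prefixes_def by (auto simp: nth_append)
  moreover have "a \<in> Alph"
    using w s \<open>w = u @ [a]\<close> K_plus_label[OF s(1), of k] by (simp add: nth_append)
  ultimately show "w \<in> (\<lambda>(u, a). u @ [a]) ` (coding_prefixes k y \<times> Alph)"
    by auto
qed

lemma coding_prefixes_Suc_Cons:
  "coding_prefixes (Suc k) y \<subseteq> (\<lambda>(a, u). a # u) ` (SIGMA a:Alph. coding_prefixes k (\<beta> * y - of_int a))"
proof
  fix w
  assume "w \<in> coding_prefixes (Suc k) y"
  then obtain s where w: "length w = Suc k" and s: "s \<in> K" "phi s = y" "\<forall>t<Suc k. s t = w ! t"
    unfolding coding_prefixes_def by blast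
  then obtain a u where au: "w = a # u"
    by (cases w) auto
  with s have "a = s 0"
    by auto
  then have "phi (\<lambda>t. s (Suc t)) = \<beta> * y - of_int a"
    using phi_K_plus_Suc[OF s(1)] s(2) by simp
  then have "u \<in> coding_prefixes k (\<beta> * y - of_int a)"
    unfolding coding_prefixes_def using w s au K_plus_Suc[OF s(1)] by auto
  moreover have "a \<in> Alph"
    using \<open>a = s 0\<close> K_plus_label[OF s(1)] by simp
  ultimately show "w \<in> (\<lambda>(a, u). a # u) ` (SIGMA a:Alph. coding_prefixes k (\<beta> * y - of_int a))"
    using au by force
qed

lemma coding_prefixes_nonempty_bound: "w \<in> coding_prefixes k y \<Longrightarrow> \<bar>y\<bar> \<le> radius"
  unfolding coding_prefixes_def using phi_K_plus_bound by auto

lemma coding_prefixes_disjoint: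
  assumes "2 * radius / \<beta> ^ k < \<bar>y - y'\<bar>"
  shows "coding_prefixes k y \<inter> coding_prefixes k y' = {}"
proof (rule ccontr)
  assume "coding_prefixes k y \<inter> coding_prefixes k y' \<noteq> {}"
  then obtain w s s' where "s \<in> K" "phi s = y" "\<forall>t<k. s t = w ! t"
    and "s' \<in> K" "phi s' = y'" "\<forall>t<k. s' t = w ! t"
    unfolding coding_prefixes_def by blast
  then have "\<bar>y - y'\<bar> \<le> 2 * radius / \<beta> ^ k"
    using phi_K_plus_agree_prefix by metis
  with assms show False
    by simp
qed

definition transition :: "nat \<Rightarrow> nat \<Rightarrow> real" where
  "transition j j' = (if (j, j') \<in> E then vR j' / (lam * vR j) else 0)"

lemma transition_nonneg: "transition j j' \<ge> 0"
  unfolding transition_def using edges_subset vR_pos lam_pos by (auto intro!: divide_nonneg_pos less_imp_le)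

lemma transition_pos: "(j, j') \<in> E \<Longrightarrow> transition j j' > 0"
  unfolding transition_def using edges_subset vR_pos lam_pos by auto

lemma sum_transition:
  assumes "j < n"
  shows "(\<Sum>j'<n. transition j j') = 1"
proof -
  have "(\<Sum>j'<n. transition j j') = (\<Sum>j'<n. M j j' * vR j') / (lam * vR j)"
    unfolding transition_def sum_divide_distrib by (intro sum.cong) (auto simp: total_matrix_eq)
  also have "\<dots> = 1"
    using vR_eig vR_pos[rule_format, OF assms] lam_pos assms by simp
  finally show ?thesis .
qed

definition prefix_mass :: "nat \<Rightarrow> nat \<Rightarrow> real \<Rightarrow> real" where
  "prefix_mass k j y = (\<Sum>w\<in>coding_prefixes k y. weight w j) / (lam ^ k * vR j)"

lemma prefix_mass_nonneg: "j < n \<Longrightarrow> prefix_mass k j y \<ge> 0"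
  unfolding prefix_mass_def using weight_nonneg vR_pos lam_pos
  by (intro divide_nonneg_pos sum_nonneg) auto

lemma prefix_mass_Suc_le:
  assumes "j < n"
  shows "prefix_mass (Suc k) j y \<le> prefix_mass k j y"
proof -
  have "(\<Sum>w\<in>coding_prefixes (Suc k) y. weight w j) \<le> (\<Sum>(u, a)\<in>coding_prefixes k y \<times> Alph. weight (u @ [a]) j)"
    using sum_subset_image_le[OF _ coding_prefixes_Suc_snoc, where g = "\<lambda>w. weight w j"]
    by (simp add: finite_coding_prefixes finite_Alph weight_nonneg case_prod_beta')
  also have "\<dots> = lam * (\<Sum>u\<in>coding_prefixes k y. weight u j)"
    by (simp add: sum.cartesian_product[symmetric] sum_weight_snoc sum_distrib_left)
  finally have "prefix_mass (Suc k) j y \<le> lam * (\<Sum>u\<in>coding_prefixes k y. weight u j) / (lam ^ Suc k * vR j)"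
    unfolding prefix_mass_def using vR_pos assms lam_pos by (intro divide_right_mono) auto
  also have "\<dots> = prefix_mass k j y"
    unfolding prefix_mass_def using lam_pos by simp
  finally show ?thesis .
qed

lemma sum_weight_coding_prefixes_Suc:
  "(\<Sum>w\<in>coding_prefixes (Suc k) y. weight w j)
    \<le> (\<Sum>j'<n. if (j, j') \<in> E then (\<Sum>u\<in>coding_prefixes k (\<beta> * y - of_int (lbl (j, j'))). weight u j') else 0)"
proof -
  let ?S = "\<lambda>j' z. \<Sum>u\<in>coding_prefixes k z. weight u j'"
  have "(\<Sum>w\<in>coding_prefixes (Suc k) y. weight w j)
      \<le> (\<Sum>(a, u)\<in>(SIGMA a:Alph. coding_prefixes k (\<beta> * y - of_int a)). weight (a # u) j)"
    using sum_subset_image_le[OF _ coding_prefixes_Suc_Cons, where g = "\<lambda>w. weight w j"]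
    by (simp add: finite_coding_prefixes finite_Alph weight_nonneg case_prod_beta')
  also have "\<dots> = (\<Sum>a\<in>Alph. \<Sum>u\<in>coding_prefixes k (\<beta> * y - of_int a). weight (a # u) j)"
    by (rule sum.Sigma[symmetric]) (auto simp: finite_Alph finite_coding_prefixes)
  also have "\<dots> = (\<Sum>a\<in>Alph. \<Sum>j'<n. label_matrix E lbl a j j' * ?S j' (\<beta> * y - of_int a))"
    unfolding weight_Cons sum_distrib_left by (intro sum.cong refl) (rule sum.swap)
  also have "\<dots> = (\<Sum>j'<n. \<Sum>a\<in>Alph. label_matrix E lbl a j j' * ?S j' (\<beta> * y - of_int a))"
    by (rule sum.swap)
  also have "\<dots> = (\<Sum>j'<n. if (j, j') \<in> E then ?S j' (\<beta> * y - of_int (lbl (j, j'))) else 0)"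
    by (intro sum.cong refl) (rule sum_label_matrix)
  finally show ?thesis .
qed

lemma prefix_mass_Suc_le_transition:
  assumes "j < n"
  shows "prefix_mass (Suc k) j y \<le> (\<Sum>j'<n. transition j j' * prefix_mass k j' (\<beta> * y - of_int (lbl (j, j'))))"
proof -
  let ?y = "\<lambda>j'. \<beta> * y - of_int (lbl (j, j'))"
  let ?S = "\<lambda>j'. \<Sum>u\<in>coding_prefixes k (?y j'). weight u j'"
  have pos: "lam ^ Suc k * vR j > 0"
    using lam_pos vR_pos assms by simp
  have "prefix_mass (Suc k) j y \<le> (\<Sum>j'<n. if (j, j') \<in> E then ?S j' else 0) / (lam ^ Suc k * vR j)"
    unfolding prefix_mass_def by (rule divide_right_mono[OF sum_weight_coding_prefixes_Suc less_imp_le[OF pos]])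
  also have "\<dots> = (\<Sum>j'<n. transition j j' * prefix_mass k j' (?y j'))"
    unfolding sum_divide_distrib
  proof (intro sum.cong refl)
    fix j'
    assume "j' \<in> {..<n}"
    then have "vR j' > 0"
      using vR_pos by simp
    then show "(if (j, j') \<in> E then ?S j' else 0) / (lam ^ Suc k * vR j) = transition j j' * prefix_mass k j' (?y j')"
      using lam_pos by (simp add: transition_def prefix_mass_def)
  qed
  finally show ?thesis .
qed

lemma sum_prefix_mass_le_1:
  assumes "j < n" and "finite Y"
    and disjoint: "\<And>y y'. y \<in> Y \<Longrightarrow> y' \<in> Y \<Longrightarrow> y \<noteq> y' \<Longrightarrow> coding_prefixes k y \<inter> coding_prefixes k y' = {}"
  shows "(\<Sum>y\<in>Y. prefix_mass k j y) \<le> 1"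
proof -
  have "(\<Sum>y\<in>Y. \<Sum>w\<in>coding_prefixes k y. weight w j) = (\<Sum>w\<in>(\<Union>y\<in>Y. coding_prefixes k y). weight w j)"
    using assms finite_coding_prefixes by (intro sum.UNION_disjoint[symmetric]) auto
  also have "\<dots> \<le> (\<Sum>w\<in>words k. weight w j)"
    using finite_words coding_prefixes_subset_words weight_nonneg by (intro sum_mono2) auto
  also have "\<dots> = lam ^ k * vR j"
    using assms(1) by (rule sum_weight_words)
  finally show ?thesis
    unfolding prefix_mass_def sum_divide_distrib[symmetric] using lam_pos vR_pos assms(1) by simp
qed

definition limit_mass :: "nat \<Rightarrow> real \<Rightarrow> real" where
  "limit_mass j y = (INF k. prefix_mass k j y)"

lemma bdd_below_prefix_mass: "j < n \<Longrightarrow> bdd_below (range (\<lambda>k. prefix_mass k j y))"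
  using prefix_mass_nonneg by (intro bdd_belowI[of _ 0]) auto

lemma prefix_mass_tendsto: "j < n \<Longrightarrow> (\<lambda>k. prefix_mass k j y) \<longlonglongrightarrow> limit_mass j y"
  unfolding limit_mass_def
  by (intro LIMSEQ_decseq_INF bdd_below_prefix_mass decseq_SucI prefix_mass_Suc_le)

lemma limit_mass_le_prefix_mass: "j < n \<Longrightarrow> limit_mass j y \<le> prefix_mass k j y"
  unfolding limit_mass_def by (rule cInf_lower[OF rangeI bdd_below_prefix_mass])

lemma limit_mass_nonneg: "j < n \<Longrightarrow> limit_mass j y \<ge> 0"
  unfolding limit_mass_def using prefix_mass_nonneg by (intro cINF_greatest) auto

lemma limit_mass_subharmonic:
  assumes "j < n"
  shows "limit_mass j y \<le> (\<Sum>j'<n. transition j j' * limit_mass j' (\<beta> * y - of_int (lbl (j, j'))))"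
proof (rule LIMSEQ_le)
  show "(\<lambda>k. prefix_mass (Suc k) j y) \<longlonglongrightarrow> limit_mass j y"
    using prefix_mass_tendsto[OF assms] by (rule LIMSEQ_Suc)
  show "(\<lambda>k. \<Sum>j'<n. transition j j' * prefix_mass k j' (\<beta> * y - of_int (lbl (j, j'))))
      \<longlonglongrightarrow> (\<Sum>j'<n. transition j j' * limit_mass j' (\<beta> * y - of_int (lbl (j, j'))))"
    by (intro tendsto_sum tendsto_mult_left prefix_mass_tendsto) simp
  show "\<exists>N. \<forall>k\<ge>N. prefix_mass (Suc k) j y \<le> (\<Sum>j'<n. transition j j' * prefix_mass k j' (\<beta> * y - of_int (lbl (j, j'))))"
    using prefix_mass_Suc_le_transition[OF assms] by blast
qed

lemma sum_limit_mass_le_1: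
  assumes "j < n" and "finite Y"
  shows "(\<Sum>y\<in>Y. limit_mass j y) \<le> 1"
proof (rule LIMSEQ_le)
  show "(\<lambda>k. \<Sum>y\<in>Y. prefix_mass k j y) \<longlonglongrightarrow> (\<Sum>y\<in>Y. limit_mass j y)"
    by (intro tendsto_sum prefix_mass_tendsto assms)
  show "(\<lambda>k. 1) \<longlonglongrightarrow> (1 :: real)"
    by simp
  have "(\<lambda>k. 2 * radius * (1 / \<beta>) ^ k) \<longlonglongrightarrow> 0"
    using beta_gt_1 by (intro tendsto_mult_right_zero LIMSEQ_realpow_zero) auto
  then have "(\<lambda>k. 2 * radius / \<beta> ^ k) \<longlonglongrightarrow> 0"
    by (simp add: power_divide)
  then have "\<forall>\<^sub>F k in sequentially. \<forall>y\<in>Y. \<forall>y'\<in>Y. y \<noteq> y' \<longrightarrow> 2 * radius / \<beta> ^ k < \<bar>y - y'\<bar>"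
    by (intro eventually_ball_finite assms ballI) (auto intro: order_tendstoD(2))
  then have "\<forall>\<^sub>F k in sequentially. (\<Sum>y\<in>Y. prefix_mass k j y) \<le> 1"
    by eventually_elim (intro sum_prefix_mass_le_1 assms coding_prefixes_disjoint; blast)
  then show "\<exists>N. \<forall>k\<ge>N. (\<Sum>y\<in>Y. prefix_mass k j y) \<le> 1"
    by (simp add: eventually_sequentially)
qed

lemma limit_mass_pos_bound:
  assumes "j < n" and "limit_mass j y > 0"
  shows "\<bar>y\<bar> \<le> radius"
proof -
  have "prefix_mass 0 j y > 0"
    using limit_mass_le_prefix_mass[OF assms(1), of y 0] assms(2) by linarith
  then obtain w where "w \<in> coding_prefixes 0 y"
    unfolding prefix_mass_def by (metis divide_eq_0_iff less_irrefl sum.empty ex_in_conv)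
  then show ?thesis
    by (rule coding_prefixes_nonempty_bound)
qed

lemma finite_limit_mass_ge:
  assumes "j < n" and "c > 0"
  shows "finite {y. c \<le> limit_mass j y}"
proof (rule ccontr)
  assume "infinite {y. c \<le> limit_mass j y}"
  then obtain Y where Y: "finite Y" "card Y = nat \<lceil>1 / c\<rceil> + 1" "Y \<subseteq> {y. c \<le> limit_mass j y}"
    using infinite_arbitrarily_large by blast
  have "real (card Y) * c = (\<Sum>y\<in>Y. c)"
    by simp
  also have "\<dots> \<le> (\<Sum>y\<in>Y. limit_mass j y)"
    using Y(3) by (intro sum_mono) auto
  also have "\<dots> \<le> 1"
    using assms(1) Y(1) by (rule sum_limit_mass_le_1)
  finally have "real (card Y) * c \<le> 1" .
  moreover have "real (card Y) > 1 / c"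
    using Y(2) by linarith
  ultimately show False
    using assms(2) by (simp add: field_simps)
qed

lemma limit_mass_attains_max:
  assumes "j0 < n" and "limit_mass j0 y0 > 0"
  obtains G jm ym where "G > 0" and "\<forall>j<n. \<forall>y. limit_mass j y \<le> G"
    and "jm < n" and "limit_mass jm ym = G"
proof -
  define T where "T = (SIGMA j:{..<n}. {y. limit_mass j0 y0 \<le> limit_mass j y})"
  define G where "G = Max ((\<lambda>(j, y). limit_mass j y) ` T)"
  have "finite T"
    unfolding T_def using finite_limit_mass_ge assms by auto
  moreover have "(j0, y0) \<in> T"
    unfolding T_def using assms by auto
  ultimately have "G \<in> (\<lambda>(j, y). limit_mass j y) ` T" and le_G: "\<And>t. t \<in> T \<Longrightarrow> (\<lambda>(j, y). limit_mass j y) t \<le> G"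
    unfolding G_def by (auto intro: Max_in Max_ge)
  then obtain jm ym where "(jm, ym) \<in> T" and "limit_mass jm ym = G"
    by auto
  show thesis
  proof (rule that)
    have "limit_mass j y \<le> G" if "j < n" for j y
    proof (cases "limit_mass j0 y0 \<le> limit_mass j y")
      case True
      with that show ?thesis
        using le_G[of "(j, y)"] unfolding T_def by simp
    next
      case False
      then show ?thesis
        using le_G[OF \<open>(j0, y0) \<in> T\<close>] by simp
    qed
    then show "\<forall>j<n. \<forall>y. limit_mass j y \<le> G"
      by blast
    then show "G > 0"
      using assms order_less_le_trans by blast
    show "jm < n"
      using \<open>(jm, ym) \<in> T\<close> unfolding T_def by simp
  qed fact
qed

lemma limit_mass_max_propagates:
  assumes max: "\<forall>j<n. \<forall>y. limit_mass j y \<le> G"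
    and "i < n" and "limit_mass i z = G" and "(i, j) \<in> E"
  shows "limit_mass j (\<beta> * z - of_int (lbl (i, j))) = G"
proof -
  let ?g = "\<lambda>j'. limit_mass j' (\<beta> * z - of_int (lbl (i, j')))"
  let ?h = "\<lambda>j'. transition i j' * (G - ?g j')"
  have "j < n"
    using assms(4) edges_subset by auto
  have h_nonneg: "?h j' \<ge> 0" if "j' < n" for j'
    using transition_nonneg max that by simp
  have "(\<Sum>j'<n. ?h j') = G * (\<Sum>j'<n. transition i j') - (\<Sum>j'<n. transition i j' * ?g j')"
    by (simp add: algebra_simps sum_subtractf sum_distrib_left)
  also have "\<dots> = limit_mass i z - (\<Sum>j'<n. transition i j' * ?g j')"
    using sum_transition[OF assms(2)] assms(3) by simp
  also have "\<dots> \<le> 0"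
    using limit_mass_subharmonic[OF assms(2)] by simp
  finally have "?h j \<le> 0"
    using member_le_sum[of j "{..<n}" ?h] h_nonneg \<open>j < n\<close> by fastforce
  then have "G \<le> ?g j"
    using transition_pos[OF assms(4)] by (simp add: mult_le_0_iff)
  with max \<open>j < n\<close> show ?thesis
    by (simp add: order_antisym)
qed

lemma limit_mass_pos_edge_consistent:
  assumes "j0 < n" and "limit_mass j0 y0 > 0"
  obtains y where "edge_consistent y"
proof -
  obtain G jm ym where "G > 0" and max: "\<forall>j<n. \<forall>y. limit_mass j y \<le> G"
    and "jm < n" and "limit_mass jm ym = G"
    using assms by (rule limit_mass_attains_max)
  let ?S = "\<lambda>j y. j < n \<and> limit_mass j y = G"
  show thesis
  proof (rule invariant_set_edge_consistent[of ?S radius jm ym])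
    show "?S j (\<beta> * z - of_int (lbl (i, j)))" if "?S i z" and "(i, j) \<in> E" for i z j
      using limit_mass_max_propagates[OF max] that edges_subset by auto
    show "j < n \<and> \<bar>z\<bar> \<le> radius" if "?S j z" for j z
      using limit_mass_pos_bound \<open>G > 0\<close> that by auto
    show "?S jm ym"
      using \<open>jm < n\<close> \<open>limit_mass jm ym = G\<close> by simp
  qed (rule that)
qed

end

locale parry_measure = parry_weights +
  fixes vL :: "nat \<Rightarrow> real" and \<mu> :: "(nat \<Rightarrow> int) measure"
  assumes prob_space_\<mu>: "prob_space \<mu>"
    and sets_\<mu>: "sets \<mu> = sets (PiM UNIV (\<lambda>_::nat. count_space (UNIV :: int set)))"
    and emeasure_K: "emeasure \<mu> K = 1"
    and measure_cylinder: "\<forall>w. measure \<mu> (cylinder K w) = bilin n vL (word_matrix n E lbl w) vR / lam ^ length w"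
begin

lemma K_plus_sets: "K \<in> sets \<mu>"
  using emeasure_K emeasure_notin_sets by fastforce

lemma cylinder_sets: "cylinder K w \<in> sets \<mu>"
proof -
  have "{x \<in> space (PiM UNIV (\<lambda>_::nat. count_space (UNIV :: int set))). \<forall>t<length w. x t = w ! t}
      \<in> sets (PiM UNIV (\<lambda>_::nat. count_space (UNIV :: int set)))"
    by measurable
  then have "{x. \<forall>t<length w. x t = w ! t} \<in> sets \<mu>"
    by (simp add: sets_\<mu> space_PiM)
  moreover have "cylinder K w = K \<inter> {x. \<forall>t<length w. x t = w ! t}"
    unfolding cylinder_def by auto
  ultimately show ?thesis
    using K_plus_sets by auto
qed

lemma bilin_word_matrix: "bilin n vL (word_matrix n E lbl w) vR = (\<Sum>i<n. vL i * weight w i)"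
  unfolding bilin_def weight_def by (simp add: sum_distrib_left mult.assoc)

lemma measure_level_le_prefix_mass:
  "measure \<mu> {s \<in> K. phi s = y} \<le> (\<Sum>i<n. vL i * vR i * prefix_mass k i y)"
proof -
  interpret prob_space \<mu>
    by (rule prob_space_\<mu>)
  have "{s \<in> K. phi s = y} \<subseteq> (\<Union>w\<in>coding_prefixes k y. cylinder K w)"
  proof
    fix s
    assume "s \<in> {s \<in> K. phi s = y}"
    then have "map s [0..<k] \<in> coding_prefixes k y" and "s \<in> cylinder K (map s [0..<k])"
      unfolding coding_prefixes_def cylinder_def by auto
    then show "s \<in> (\<Union>w\<in>coding_prefixes k y. cylinder K w)"
      by blast
  qed
  then have "measure \<mu> {s \<in> K. phi s = y} \<le> measure \<mu> (\<Union>w\<in>coding_prefixes k y. cylinder K w)"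
    using cylinder_sets finite_coding_prefixes by (intro finite_measure_mono) auto
  also have "\<dots> \<le> (\<Sum>w\<in>coding_prefixes k y. measure \<mu> (cylinder K w))"
    using cylinder_sets finite_coding_prefixes by (intro finite_measure_subadditive_finite) auto
  also have "\<dots> = (\<Sum>w\<in>coding_prefixes k y. \<Sum>i<n. vL i * weight w i / lam ^ k)"
    using measure_cylinder
    by (intro sum.cong refl) (auto simp: bilin_word_matrix sum_divide_distrib coding_prefixes_def)
  also have "\<dots> = (\<Sum>i<n. \<Sum>w\<in>coding_prefixes k y. vL i * weight w i / lam ^ k)"
    by (rule sum.swap)
  also have "\<dots> = (\<Sum>i<n. vL i * vR i * prefix_mass k i y)"
  proof (intro sum.cong refl)
    fix i
    assume "i \<in> {..<n}"
    then have "vR i > 0"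
      using vR_pos by simp
    then show "(\<Sum>w\<in>coding_prefixes k y. vL i * weight w i / lam ^ k) = vL i * vR i * prefix_mass k i y"
      unfolding prefix_mass_def using lam_pos by (simp add: sum_distrib_left sum_divide_distrib)
  qed
  finally show ?thesis .
qed

lemma measure_level_le_limit_mass:
  "measure \<mu> {s \<in> K. phi s = y} \<le> (\<Sum>i<n. vL i * vR i * limit_mass i y)"
proof (rule LIMSEQ_le_const)
  show "(\<lambda>k. \<Sum>i<n. vL i * vR i * prefix_mass k i y) \<longlonglongrightarrow> (\<Sum>i<n. vL i * vR i * limit_mass i y)"
    by (intro tendsto_sum tendsto_mult_left prefix_mass_tendsto) simp
  show "\<exists>N. \<forall>k\<ge>N. measure \<mu> {s \<in> K. phi s = y} \<le> (\<Sum>i<n. vL i * vR i * prefix_mass k i y)"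
    using measure_level_le_prefix_mass by blast
qed

lemma atoms_subset_consistent_image:
  assumes "measure \<mu> {s \<in> K. phi s = x} > 0"
  obtains y where "edge_consistent y" and "{x. measure \<mu> {s \<in> K. phi s = x} > 0} \<subseteq> y ` {..<n}"
proof -
  have "\<exists>i<n. limit_mass i x > 0"
  proof (rule ccontr)
    assume none: "\<not> ?thesis"
    have "limit_mass i x = 0" if "i < n" for i
      using limit_mass_nonneg[OF that, of x] that none by (meson not_less order_antisym)
    then have "(\<Sum>i<n. vL i * vR i * limit_mass i x) = 0"
      by simp
    with assms measure_level_le_limit_mass[of x] show False
      by simp
  qed
  then obtain i where "i < n" and "limit_mass i x > 0"
    by blast
  then obtain y where y: "edge_consistent y"
    by (rule limit_mass_pos_edge_consistent)
  have "x' \<in> y ` {..<n}" if "measure \<mu> {s \<in> K. phi s = x'} > 0" for x'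
  proof -
    have "{s \<in> K. phi s = x'} \<noteq> {}"
      using that by (intro notI) simp
    then obtain s where "s \<in> K" and "phi s = x'"
      by blast
    moreover obtain i where "i < n" and "phi s = y i"
      using y \<open>s \<in> K\<close> by (rule edge_consistent_phi)
    ultimately show ?thesis
      by blast
  qed
  with y show thesis
    by (intro that) auto
qed

end

theorem lemma3:
  fixes Alph :: "int set" and n :: nat and E :: "(nat \<times> nat) set" and lbl :: "nat \<times> nat \<Rightarrow> int"
    and \<beta> lam :: real and vL vR :: "nat \<Rightarrow> real" and \<mu> :: "(nat \<Rightarrow> int) measure"
  assumes alph: "finite Alph"
    and graph: "E \<subseteq> {..<n} \<times> {..<n}"
    and lab_in: "\<forall>e\<in>E. lbl e \<in> Alph"
    and prim: "primitive_matrix n (total_matrix Alph E lbl)"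
    and pis: "pisot \<beta>"
    and lam_pos: "lam > 0"
    and vL_pos: "\<forall>i<n. vL i > 0" and vR_pos: "\<forall>i<n. vR i > 0"
    and vL_eig: "\<forall>j<n. (\<Sum>i<n. vL i * total_matrix Alph E lbl i j) = lam * vL j"
    and vR_eig: "\<forall>i<n. (\<Sum>j<n. total_matrix Alph E lbl i j * vR j) = lam * vR i"
    and dominant: "\<forall>(c::complex) (w::nat \<Rightarrow> complex). (\<exists>i<n. w i \<noteq> 0) \<and>
        (\<forall>i<n. (\<Sum>j<n. complex_of_real (total_matrix Alph E lbl i j) * w j) = c * w i) \<longrightarrow> cmod c \<le> lam"
    and norm: "(\<Sum>i<n. vL i * vR i) = 1"
    and mu_prob: "prob_space \<mu>"
    and mu_sets: "sets \<mu> = sets (PiM UNIV (\<lambda>_::nat. count_space (UNIV :: int set)))"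
    and mu_supp: "emeasure \<mu> (K_plus n E lbl) = 1"
    and mu_cyl: "\<forall>w::int list. measure \<mu> (cylinder (K_plus n E lbl) w) =
        bilin n vL (word_matrix n E lbl w) vR / lam ^ length w"
  shows "finite {x::real. measure \<mu> {s \<in> K_plus n E lbl. phi_plus \<beta> s = x} > 0}
       \<and> {x::real. measure \<mu> {s \<in> K_plus n E lbl. phi_plus \<beta> s = x} > 0} \<subseteq> rat_adjoin \<beta>"
proof -
  have "\<beta> > 1"
    using pis unfolding pisot_def by simp
  interpret parry_measure Alph n E lbl \<beta> lam vR vL \<mu>
  proof (intro parry_measure.intro parry_measure_axioms.intro)
    show "parry_weights Alph n E lbl \<beta> lam vR"
      by unfold_locales (rule alph graph lab_in prim \<open>\<beta> > 1\<close> lam_pos vR_pos vR_eig)+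
  qed (rule mu_prob mu_sets mu_supp mu_cyl)+
  let ?atoms = "{x. measure \<mu> {s \<in> K. phi s = x} > 0}"
  show ?thesis
  proof (cases "?atoms = {}")
    case False
    then obtain x where "measure \<mu> {s \<in> K. phi s = x} > 0"
      by blast
    then obtain y where "edge_consistent y" and "?atoms \<subseteq> y ` {..<n}"
      by (rule atoms_subset_consistent_image)
    then show ?thesis
      using edge_consistent_rat_adjoin by (auto intro: finite_subset)
  qed simp
qed

end
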